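(* Let $G$ be a group and let $\rho$ and $\rho'$ be finite-dimensional representations of $G$ over a field $k$ with equal determinant. Suppose there exists a normal subgroup $H$ of $G$ such that $\rho|_H$ and $\rho'|_H$ are absolutely irreducible and isomorphic. Then there exists a finite index subgroup $G'$ of $G$ such that $\rho|_{G'}$ and $\rho'|_{G'}$ are isomorphic. *)

theory Defs
  imports "HOL-Algebra.Coset" "HOL-Algebra.Algebraic_Closure_Type" "Jordan_Normal_Form.Determinant"
begin

definition is_rep :: "('g, 'b) monoid_scheme \<Rightarrow> nat \<Rightarrow> ('g \<Rightarrow> 'k::field mat) \<Rightarrow> bool" where
  "is_rep G n \<rho> \<longleftrightarrow>
     (\<forall>g\<in>carrier G. \<rho> g \<in> carrier_mat n n) \<and>
     (\<forall>g\<in>carrier G. \<forall>h\<in>carrier G. \<rho> (g \<otimes>\<^bsub>G\<^esub> h) = \<rho> g * \<rho> h) \<and>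
     \<rho> \<one>\<^bsub>G\<^esub> = 1\<^sub>m n"

definition invariant_subspace :: "'g set \<Rightarrow> nat \<Rightarrow> ('g \<Rightarrow> 'k::field mat) \<Rightarrow> 'k vec set \<Rightarrow> bool" where
  "invariant_subspace S n \<rho> W \<longleftrightarrow>
     W \<subseteq> carrier_vec n \<and> 0\<^sub>v n \<in> W \<and>
     (\<forall>v\<in>W. \<forall>w\<in>W. v + w \<in> W) \<and>
     (\<forall>c. \<forall>v\<in>W. c \<cdot>\<^sub>v v \<in> W) \<and>
     (\<forall>g\<in>S. \<forall>v\<in>W. \<rho> g *\<^sub>v v \<in> W)"

definition irreducible_on :: "'g set \<Rightarrow> nat \<Rightarrow> ('g \<Rightarrow> 'k::field mat) \<Rightarrow> bool" where
  "irreducible_on S n \<rho> \<longleftrightarrow> n > 0 \<and>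
     (\<forall>W. invariant_subspace S n \<rho> W \<longrightarrow> W = {0\<^sub>v n} \<or> W = carrier_vec n)"

definition abs_irreducible_on :: "'g set \<Rightarrow> nat \<Rightarrow> ('g \<Rightarrow> 'k::field mat) \<Rightarrow> bool" where
  "abs_irreducible_on S n \<rho> \<longleftrightarrow> irreducible_on S n (\<lambda>g. map_mat to_ac (\<rho> g))"

definition rep_iso_on :: "'g set \<Rightarrow> nat \<Rightarrow> ('g \<Rightarrow> 'k::field mat) \<Rightarrow> nat \<Rightarrow> ('g \<Rightarrow> 'k mat) \<Rightarrow> bool" where
  "rep_iso_on S n \<rho> n' \<rho>' \<longleftrightarrow> n = n' \<and>
     (\<exists>P\<in>carrier_mat n n. invertible_mat P \<and> (\<forall>g\<in>S. P * \<rho> g = \<rho>' g * P))"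

end

theory Submission
  imports Defs "Jordan_Normal_Form.Char_Poly"
begin

(*
  Let P intertwine \<rho> and \<rho>' on H. For g in G, normality of H makes \<rho>'(g)\<inverse> P \<rho>(g) another
  intertwiner on H, so by Schur's lemma (which needs absolute irreducibility) it equals c(g) P for a
  scalar c(g); thus P \<rho>(g) = c(g) \<rho>'(g) P. Taking determinants and using det \<rho> = det \<rho>' gives
  c(g)^n = 1, so c takes finitely many values. As c is multiplicative, its fibres are the cosets of
  G' = {g. c(g) = 1}, on which P is an isomorphism of \<rho> and \<rho>'.
*)

lemma finite_roots_of_unity:
  assumes "n > 0"
  shows "finite {c :: 'a::idom. c ^ n = 1}"
proof -
  have "monom (1::'a) n - 1 \<noteq> 0"
  proof
    assume "monom (1::'a) n - 1 = 0"
    then have "coeff (monom (1::'a) n - 1) n = 0" by simp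
    then show False using assms by (simp add: coeff_monom)
  qed
  moreover have "{c :: 'a. c ^ n = 1} \<subseteq> {x. poly (monom 1 n - 1) x = 0}"
    by (auto simp: poly_monom)
  ultimately show ?thesis using poly_roots_finite finite_subset by blast
qed

lemma (in group) finite_rcosets_if_fibres_in_subgroup:
  assumes K: "subgroup K G" and fin: "finite (f ` carrier G)"
    and fibres: "\<And>a b. a \<in> carrier G \<Longrightarrow> b \<in> carrier G \<Longrightarrow> f a = f b
      \<Longrightarrow> a \<otimes> inv b \<in> K"
  shows "finite (rcosets K)"
proof -
  let ?repr = "inv_into (carrier G) f"
  have "K #> a = K #> ?repr (f a)" if a: "a \<in> carrier G" for a
  proof -
    have b: "?repr (f a) \<in> carrier G" "f (?repr (f a)) = f a"
      using a by (auto intro: inv_into_into f_inv_into_f)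
    then have "a \<in> K #> ?repr (f a)"
      using subgroup.rcos_module_rev[OF K is_group b(1) a] fibres[OF a b(1)] by simp
    then show ?thesis using repr_independence[OF _ b(1) K] by simp
  qed
  then have "rcosets K = (\<lambda>x. K #> ?repr x) ` f ` carrier G"
    unfolding RCOSETS_def by auto
  then show ?thesis using fin by simp
qed

lemma invertible_mat_obtain_inverse:
  fixes P :: "'a::semiring_1 mat"
  assumes "P \<in> carrier_mat n n" "invertible_mat P"
  obtains P' where "P' \<in> carrier_mat n n" "P * P' = 1\<^sub>m n" "P' * P = 1\<^sub>m n"
proof -
  obtain P' where PP': "P * P' = 1\<^sub>m n" "P' * P = 1\<^sub>m (dim_row P')"
    using assms unfolding invertible_mat_def inverts_mat_def by auto
  have "dim_col P' = n" "dim_row P' = n"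
    using PP' assms(1) by (metis index_mult_mat(3) index_one_mat(3) carrier_matD(2))+
  then show thesis using that PP' by auto
qed

lemma cancel_left_inverse_mat:
  fixes A B C :: "'a::semiring_1 mat"
  assumes "A \<in> carrier_mat n n" "B \<in> carrier_mat n n" "C \<in> carrier_mat n m" "B * A = 1\<^sub>m n"
  shows "B * (A * C) = C"
  using assms by (metis assoc_mult_mat left_mult_one_mat)

lemma smult_smult_mat [simp]: "(a :: 'a::semigroup_mult) \<cdot>\<^sub>m (b \<cdot>\<^sub>m A) = (a * b) \<cdot>\<^sub>m A"
  by (rule eq_matI) (auto simp: mult.assoc)

lemma one_smult_mat [simp]: "(1 :: 'a::semiring_1) \<cdot>\<^sub>m A = A"
  by (rule eq_matI) auto

definition intertwines ::
    "'g set \<Rightarrow> ('g \<Rightarrow> 'k::field mat) \<Rightarrow> ('g \<Rightarrow> 'k mat) \<Rightarrow> 'k mat \<Rightarrow> bool" where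
  "intertwines S \<rho> \<rho>' P \<longleftrightarrow> (\<forall>g\<in>S. P * \<rho> g = \<rho>' g * P)"

lemma rep_iso_on_iff_intertwines:
  "rep_iso_on S n \<rho> n \<rho>' \<longleftrightarrow>
     (\<exists>P\<in>carrier_mat n n. invertible_mat P \<and> intertwines S \<rho> \<rho>' P)"
  unfolding rep_iso_on_def intertwines_def by simp

lemma alg_closed_eigenvector_exists:
  fixes M :: "'a::alg_closed_field mat"
  assumes "M \<in> carrier_mat n n" "n > 0"
  obtains l v where "v \<in> carrier_vec n" "v \<noteq> 0\<^sub>v n" "M *\<^sub>v v = l \<cdot>\<^sub>v v"
proof -
  have "degree (char_poly M) > 0"
    using degree_monic_char_poly[OF assms(1)] assms(2) by auto
  then obtain l where "poly (char_poly M) l = 0"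
    using alg_closed_imp_poly_has_root by blast
  then have "eigenvalue M l" using eigenvalue_root_char_poly[OF assms(1)] by simp
  then show thesis using that assms(1) unfolding eigenvalue_def eigenvector_def by auto
qed

lemma eigenspace_invariant_subspace:
  fixes M :: "'k::field mat"
  assumes M: "M \<in> carrier_mat n n" and R: "\<forall>g\<in>S. \<rho> g \<in> carrier_mat n n"
    and comm: "intertwines S \<rho> \<rho> M"
  shows "invariant_subspace S n \<rho> {v \<in> carrier_vec n. M *\<^sub>v v = l \<cdot>\<^sub>v v}"
    (is "invariant_subspace _ _ _ ?W")
  unfolding invariant_subspace_def
proof (intro conjI ballI allI)
  fix v w assume "v \<in> ?W" "w \<in> ?W"
  then show "v + w \<in> ?W"
    using M by (auto simp: mult_add_distrib_mat_vec smult_add_distrib_vec)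
next
  fix c v assume "v \<in> ?W"
  then show "c \<cdot>\<^sub>v v \<in> ?W"
    using M by (auto simp: mult_mat_vec smult_smult_assoc mult.commute)
next
  fix g v assume g: "g \<in> S" and v: "v \<in> ?W"
  have Rg: "\<rho> g \<in> carrier_mat n n" using R g by blast
  have "M *\<^sub>v (\<rho> g *\<^sub>v v) = (M * \<rho> g) *\<^sub>v v" using v Rg M by simp
  also have "\<dots> = (\<rho> g * M) *\<^sub>v v" using comm g unfolding intertwines_def by simp
  also have "\<dots> = l \<cdot>\<^sub>v (\<rho> g *\<^sub>v v)" using v Rg M by (simp add: mult_mat_vec)
  finally show "\<rho> g *\<^sub>v v \<in> ?W" using v Rg by simp
qed (use M in auto)

lemma irreducible_commutant_scalar:
  fixes M :: "'a::alg_closed_field mat"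
  assumes irr: "irreducible_on S n \<rho>" and M: "M \<in> carrier_mat n n"
    and R: "\<forall>g\<in>S. \<rho> g \<in> carrier_mat n n" and comm: "intertwines S \<rho> \<rho> M"
  obtains l where "M = l \<cdot>\<^sub>m 1\<^sub>m n"
proof -
  have "n > 0" using irr unfolding irreducible_on_def by simp
  then obtain l v where v: "v \<in> carrier_vec n" "v \<noteq> 0\<^sub>v n" "M *\<^sub>v v = l \<cdot>\<^sub>v v"
    using alg_closed_eigenvector_exists[OF M] by blast
  let ?W = "{v \<in> carrier_vec n. M *\<^sub>v v = l \<cdot>\<^sub>v v}"
  have "?W \<noteq> {0\<^sub>v n}" using v by auto
  then have W: "?W = carrier_vec n"
    using irr eigenspace_invariant_subspace[OF M R comm] unfolding irreducible_on_def by blast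
  have "M = l \<cdot>\<^sub>m 1\<^sub>m n"
  proof (rule eq_matI)
    fix i j assume "i < dim_row (l \<cdot>\<^sub>m 1\<^sub>m n)" "j < dim_col (l \<cdot>\<^sub>m 1\<^sub>m n)"
    then have ij: "i < n" "j < n" by auto
    then have "M *\<^sub>v unit_vec n j = l \<cdot>\<^sub>v unit_vec n j"
      using W unit_vec_carrier by blast
    then have "(M *\<^sub>v unit_vec n j) $ i = (l \<cdot>\<^sub>v unit_vec n j) $ i" by simp
    then show "M $$ (i, j) = (l \<cdot>\<^sub>m 1\<^sub>m n) $$ (i, j)"
      using ij M by (simp add: scalar_prod_right_unit)
  qed (use M in auto)
  then show thesis by (rule that)
qed

interpretation to_ac_hom: field_hom "to_ac :: 'a::field \<Rightarrow> 'a alg_closure"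
  by unfold_locales simp_all

lemma abs_irreducible_commutant_scalar:
  fixes M :: "'k::field mat"
  assumes irr: "abs_irreducible_on S n \<rho>" and M: "M \<in> carrier_mat n n"
    and R: "\<forall>g\<in>S. \<rho> g \<in> carrier_mat n n" and comm: "intertwines S \<rho> \<rho> M"
  obtains c where "M = c \<cdot>\<^sub>m 1\<^sub>m n"
proof -
  let ?ac = "map_mat to_ac"
  have "intertwines S (\<lambda>g. ?ac (\<rho> g)) (\<lambda>g. ?ac (\<rho> g)) (?ac M)"
    using comm R M unfolding intertwines_def by (metis to_ac_hom.mat_hom_mult)
  then obtain l where l: "?ac M = l \<cdot>\<^sub>m 1\<^sub>m n"
    using irreducible_commutant_scalar[of S n "\<lambda>g. ?ac (\<rho> g)" "?ac M"] irr M R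
    unfolding abs_irreducible_on_def by auto
  have "n > 0" using irr unfolding abs_irreducible_on_def irreducible_on_def by simp
  then have "l = to_ac (M $$ (0, 0))"
    using arg_cong[OF l, of "\<lambda>A. A $$ (0, 0)"] M by simp
  then have "?ac M = ?ac (M $$ (0, 0) \<cdot>\<^sub>m 1\<^sub>m n)"
    using l by (auto intro!: eq_matI)
  then show thesis using that to_ac_hom.mat_hom_inj by blast
qed

lemma intertwiners_proportional:
  fixes \<rho> \<rho>' :: "'g \<Rightarrow> 'k::field mat"
  assumes irr: "abs_irreducible_on S n \<rho>"
    and R: "\<forall>g\<in>S. \<rho> g \<in> carrier_mat n n" and R': "\<forall>g\<in>S. \<rho>' g \<in> carrier_mat n n"
    and P: "P \<in> carrier_mat n n" "invertible_mat P" "intertwines S \<rho> \<rho>' P"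
    and Q: "Q \<in> carrier_mat n n" "intertwines S \<rho> \<rho>' Q"
  obtains c where "Q = c \<cdot>\<^sub>m P"
proof -
  obtain P' where P': "P' \<in> carrier_mat n n" "P * P' = 1\<^sub>m n" "P' * P = 1\<^sub>m n"
    using invertible_mat_obtain_inverse[OF P(1,2)] .
  have PQ: "P' * Q \<in> carrier_mat n n" using P' Q by simp
  have "intertwines S \<rho> \<rho> (P' * Q)"
    unfolding intertwines_def
  proof
    fix g assume g: "g \<in> S"
    have Rg: "\<rho> g \<in> carrier_mat n n" "\<rho>' g \<in> carrier_mat n n" using R R' g by auto
    have "P' * Q * \<rho> g = P' * (\<rho>' g * Q)" using P' Q Rg g unfolding intertwines_def by simp
    also have "\<dots> = P' * (P * \<rho> g * (P' * Q))"
      using P P' Q Rg g unfolding intertwines_def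
      by (simp add: assoc_mult_mat[of _ n n _ n _ n] cancel_left_inverse_mat[of _ n _ _ n])
    also have "\<dots> = \<rho> g * (P' * Q)"
      using P P' Q Rg by (simp add: assoc_mult_mat[of _ n n _ n _ n] cancel_left_inverse_mat[of _ n _ _ n])
    finally show "P' * Q * \<rho> g = \<rho> g * (P' * Q)" .
  qed
  then obtain c where c: "P' * Q = c \<cdot>\<^sub>m 1\<^sub>m n"
    by (rule abs_irreducible_commutant_scalar[OF irr PQ R])
  have "Q = P * (P' * Q)" using P P' Q by (simp add: cancel_left_inverse_mat)
  also have "\<dots> = c \<cdot>\<^sub>m P" using c P by (simp add: mult_smult_distrib[of P n n "1\<^sub>m n" n])
  finally show thesis by (rule that)
qed

locale representation = group G for G :: "('g, 'b) monoid_scheme" (structure) +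
  fixes n :: nat and \<rho> :: "'g \<Rightarrow> 'k::field mat"
  assumes is_rep: "is_rep G n \<rho>"
begin

(*
  The library rules leave inner dimensions schematic, which the simplifier cannot discharge;
  these instances fix them to n.
*)
lemmas square_mat_simps [simp] = mult_carrier_mat[of _ n n _ n] assoc_mult_mat[of _ n n _ n _ n]
  mult_smult_distrib[of _ n n _ n] mult_smult_assoc_mat[of _ n n _ n]
  cancel_left_inverse_mat[of _ n _ _ n]

lemma rep_carrier [simp]: "g \<in> carrier G \<Longrightarrow> \<rho> g \<in> carrier_mat n n"
  using is_rep unfolding is_rep_def by blast

lemma rep_mult: "g \<in> carrier G \<Longrightarrow> h \<in> carrier G \<Longrightarrow> \<rho> (g \<otimes> h) = \<rho> g * \<rho> h"
  using is_rep unfolding is_rep_def by blast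

lemma rep_one: "\<rho> \<one> = 1\<^sub>m n"
  using is_rep unfolding is_rep_def by blast

lemma rep_inv_right [simp]: "g \<in> carrier G \<Longrightarrow> \<rho> g * \<rho> (inv g) = 1\<^sub>m n"
  using rep_mult[of g "inv g"] rep_one by simp

lemma rep_inv_left [simp]: "g \<in> carrier G \<Longrightarrow> \<rho> (inv g) * \<rho> g = 1\<^sub>m n"
  using rep_mult[of "inv g" g] rep_one by simp

lemma det_rep_nonzero: "g \<in> carrier G \<Longrightarrow> det (\<rho> g) \<noteq> 0"
  using det_mult[of "\<rho> g" n "\<rho> (inv g)"] by auto

end

locale representation_pair = R: representation G n \<rho> + R': representation G n \<rho>'
  for G :: "('g, 'b) monoid_scheme" (structure) and n and \<rho> \<rho>' :: "'g \<Rightarrow> 'k::field mat"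
begin

lemma twisted_intertwiner_mult:
  assumes P: "P \<in> carrier_mat n n" and ab: "a \<in> carrier G" "b \<in> carrier G"
    and Pa: "P * \<rho> a = c \<cdot>\<^sub>m (\<rho>' a * P)" and Pb: "P * \<rho> b = d \<cdot>\<^sub>m (\<rho>' b * P)"
  shows "P * \<rho> (a \<otimes> b) = (c * d) \<cdot>\<^sub>m (\<rho>' (a \<otimes> b) * P)"
proof -
  have "P * \<rho> (a \<otimes> b) = P * \<rho> a * \<rho> b" using P ab by (simp add: R.rep_mult)
  also have "\<dots> = c \<cdot>\<^sub>m (\<rho>' a * (P * \<rho> b))"
    using P ab Pa by simp
  also have "\<dots> = (c * d) \<cdot>\<^sub>m (\<rho>' a * \<rho>' b * P)"
    using P ab Pb by simp
  finally show ?thesis using ab by (simp add: R'.rep_mult)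
qed

lemma twisted_intertwiner_inv:
  assumes P: "P \<in> carrier_mat n n" and a: "a \<in> carrier G"
    and Pa: "P * \<rho> a = c \<cdot>\<^sub>m (\<rho>' a * P)" and c: "c \<noteq> 0"
  shows "P * \<rho> (inv a) = inverse c \<cdot>\<^sub>m (\<rho>' (inv a) * P)"
proof -
  have "\<rho>' (inv a) * P = \<rho>' (inv a) * (P * \<rho> a) * \<rho> (inv a)" using P a by simp
  also have "\<dots> = c \<cdot>\<^sub>m (P * \<rho> (inv a))"
    using P a Pa by simp
  finally have "inverse c \<cdot>\<^sub>m (\<rho>' (inv a) * P) = (inverse c * c) \<cdot>\<^sub>m (P * \<rho> (inv a))" by simp
  then show ?thesis using c by simp
qed

lemma intertwiner_stabilizer_subgroup:
  assumes P: "P \<in> carrier_mat n n"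
  shows "subgroup {g \<in> carrier G. P * \<rho> g = \<rho>' g * P} G" (is "subgroup ?K G")
proof (rule R.subgroupI)
  show "?K \<noteq> {}" using P R.rep_one R'.rep_one by auto
next
  fix a assume "a \<in> ?K"
  then show "inv a \<in> ?K"
    using twisted_intertwiner_inv[OF P, of a 1] by simp
next
  fix a b assume "a \<in> ?K" "b \<in> ?K"
  then show "a \<otimes> b \<in> ?K"
    using twisted_intertwiner_mult[OF P, of a b 1 1] by simp
qed auto

lemma intertwiner_conjugate:
  assumes H: "H \<lhd> G" and P: "P \<in> carrier_mat n n" "intertwines H \<rho> \<rho>' P"
    and g: "g \<in> carrier G"
  shows "intertwines H \<rho> \<rho>' (\<rho>' (inv g) * P * \<rho> g)"
  unfolding intertwines_def
proof
  fix h assume h: "h \<in> H"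
  interpret normal H G by (rule H)
  define k where "k = g \<otimes> h \<otimes> inv g"
  have hG: "h \<in> carrier G" using h subset by blast
  have kH: "k \<in> H" unfolding k_def using inv_op_closed2 g h by blast
  then have kG: "k \<in> carrier G" using subset by blast
  have gh: "\<rho> g * \<rho> h = \<rho> k * \<rho> g"
  proof -
    have "g \<otimes> h = k \<otimes> g" unfolding k_def using g hG by (simp add: R.m_assoc)
    then show ?thesis using g hG kG by (metis R.rep_mult)
  qed
  have kg: "\<rho>' (inv g) * \<rho>' k = \<rho>' h * \<rho>' (inv g)"
  proof -
    have "inv g \<otimes> k = h \<otimes> inv g" unfolding k_def using g hG by (simp flip: R.m_assoc)
    then show ?thesis using g hG kG by (metis R'.rep_mult R.inv_closed)
  qed
  have Pk: "P * \<rho> k = \<rho>' k * P" using P(2) kH unfolding intertwines_def by blast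
  have "\<rho>' (inv g) * P * \<rho> g * \<rho> h = \<rho>' (inv g) * (P * (\<rho> g * \<rho> h))"
    using P g hG by simp
  also have "\<dots> = \<rho>' (inv g) * (P * \<rho> k * \<rho> g)" using P g kG gh by simp
  also have "\<dots> = \<rho>' (inv g) * \<rho>' k * (P * \<rho> g)" using P g kG Pk by simp
  also have "\<dots> = \<rho>' h * (\<rho>' (inv g) * P * \<rho> g)" using P g hG kG kg by simp
  finally show "\<rho>' (inv g) * P * \<rho> g * \<rho> h = \<rho>' h * (\<rho>' (inv g) * P * \<rho> g)" .
qed

lemma intertwiner_twist_root_of_unity:
  assumes det: "\<forall>g\<in>carrier G. det (\<rho> g) = det (\<rho>' g)"
    and H: "H \<lhd> G" and irr: "abs_irreducible_on H n \<rho>"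
    and P: "P \<in> carrier_mat n n" "invertible_mat P" "intertwines H \<rho> \<rho>' P"
    and g: "g \<in> carrier G"
  obtains c where "c ^ n = 1" "P * \<rho> g = c \<cdot>\<^sub>m (\<rho>' g * P)"
proof -
  have "H \<subseteq> carrier G" using H normal_imp_subgroup subgroup.subset by blast
  then have "\<forall>h\<in>H. \<rho> h \<in> carrier_mat n n" "\<forall>h\<in>H. \<rho>' h \<in> carrier_mat n n" by auto
  moreover have "\<rho>' (inv g) * P * \<rho> g \<in> carrier_mat n n" using P g by simp
  ultimately obtain c where c: "\<rho>' (inv g) * P * \<rho> g = c \<cdot>\<^sub>m P"
    by (rule intertwiners_proportional[OF irr _ _ P _ intertwiner_conjugate[OF H P(1,3) g]])
  have twist: "P * \<rho> g = c \<cdot>\<^sub>m (\<rho>' g * P)"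
  proof -
    have "P * \<rho> g = \<rho>' g * (\<rho>' (inv g) * P * \<rho> g)" using P g by simp
    also have "\<dots> = c \<cdot>\<^sub>m (\<rho>' g * P)" using c P g by simp
    finally show ?thesis .
  qed
  obtain P' where P': "P' \<in> carrier_mat n n" "P * P' = 1\<^sub>m n"
    using invertible_mat_obtain_inverse[OF P(1,2)] by blast
  have "det P \<noteq> 0" using det_mult[OF P(1) P'(1)] P'(2) by auto
  moreover have "det P * det (\<rho> g) = c ^ n * (det (\<rho> g) * det P)"
    using arg_cong[OF twist, of det] P g det
    by (simp add: det_mult[of P n "\<rho> g"] det_mult[of "\<rho>' g" n P])
  ultimately have "c ^ n = 1" using R.det_rep_nonzero[OF g] by simp
  then show thesis using that twist by blast
qed

lemma finite_index_intertwiner_stabilizer: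
  assumes det: "\<forall>g\<in>carrier G. det (\<rho> g) = det (\<rho>' g)"
    and H: "H \<lhd> G" and irr: "abs_irreducible_on H n \<rho>"
    and P: "P \<in> carrier_mat n n" "invertible_mat P" "intertwines H \<rho> \<rho>' P"
  shows "finite (rcosets {g \<in> carrier G. P * \<rho> g = \<rho>' g * P})" (is "finite (rcosets ?K)")
proof -
  define twist where "twist g = (SOME c. c ^ n = 1 \<and> P * \<rho> g = c \<cdot>\<^sub>m (\<rho>' g * P))" for g
  have twist: "twist g ^ n = 1 \<and> P * \<rho> g = twist g \<cdot>\<^sub>m (\<rho>' g * P)" if "g \<in> carrier G" for g
  proof -
    have "\<exists>c. c ^ n = 1 \<and> P * \<rho> g = c \<cdot>\<^sub>m (\<rho>' g * P)"
      by (rule intertwiner_twist_root_of_unity[OF det H irr P that]) blast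
    then show ?thesis unfolding twist_def by (rule someI_ex)
  qed
  have "n > 0" using irr unfolding abs_irreducible_on_def irreducible_on_def by simp
  show ?thesis
  proof (rule R.finite_rcosets_if_fibres_in_subgroup[OF intertwiner_stabilizer_subgroup[OF P(1)]])
    show "finite (twist ` carrier G)"
      by (rule finite_subset[OF _ finite_roots_of_unity[OF \<open>n > 0\<close>]]) (use twist in auto)
    fix a b assume ab: "a \<in> carrier G" "b \<in> carrier G" "twist a = twist b"
    have nonzero: "twist b \<noteq> 0" using twist[OF ab(2)] \<open>n > 0\<close> by (metis zero_neq_one zero_power)
    then have "P * \<rho> (inv b) = inverse (twist b) \<cdot>\<^sub>m (\<rho>' (inv b) * P)"
      using twisted_intertwiner_inv[OF P(1) ab(2)] twist[OF ab(2)] by simp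
    then have "P * \<rho> (a \<otimes> inv b) = (twist a * inverse (twist b)) \<cdot>\<^sub>m (\<rho>' (a \<otimes> inv b) * P)"
      by (rule twisted_intertwiner_mult[OF P(1) ab(1) R.inv_closed[OF ab(2)]
            conjunct2[OF twist[OF ab(1)]]])
    then show "a \<otimes> inv b \<in> ?K" using ab nonzero by simp
  qed
qed

end

theorem lemma2p6:
  fixes G :: "('g, 'b) monoid_scheme"
    and \<rho> \<rho>' :: "'g \<Rightarrow> 'k::field mat"
    and n n' :: nat
  assumes "group G"
    and "is_rep G n \<rho>" and "is_rep G n' \<rho>'"
    and "\<forall>g\<in>carrier G. det (\<rho> g) = det (\<rho>' g)"
    and "H \<lhd> G"
    and "abs_irreducible_on H n \<rho>" and "abs_irreducible_on H n' \<rho>'"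
    and "rep_iso_on H n \<rho> n' \<rho>'"
  shows "\<exists>G'. subgroup G' G \<and> finite (rcosets\<^bsub>G\<^esub> G') \<and> rep_iso_on G' n \<rho> n' \<rho>'"
proof -
  have n': "n' = n" using assms(8) unfolding rep_iso_on_def by simp
  interpret representation_pair G n \<rho> \<rho>'
    using assms(1-3) n' by (simp add: representation_pair_def representation_def representation_axioms_def)
  obtain P where P: "P \<in> carrier_mat n n" "invertible_mat P" "intertwines H \<rho> \<rho>' P"
    using assms(8) n' rep_iso_on_iff_intertwines by blast
  let ?G' = "{g \<in> carrier G. P * \<rho> g = \<rho>' g * P}"
  have "subgroup ?G' G" using intertwiner_stabilizer_subgroup[OF P(1)] .
  moreover have "finite (rcosets\<^bsub>G\<^esub> ?G')"
    using finite_index_intertwiner_stabilizer[OF assms(4-6) P] .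
  moreover have "rep_iso_on ?G' n \<rho> n' \<rho>'" using P n' unfolding rep_iso_on_def by auto
  ultimately show ?thesis by blast
qed

end
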